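(* For a word $w$ over $[n]$, the following are equivalent: (1) $w$ is $n$-complete; (2) $w$ synchronizes every member of $\mathcal{F}(n)$; (3) $w$ synchronizes every member of $\mathcal{F}^+(n)$; (4) $w$ synchronizes every member of $\mathcal{A}(n)$.
   Context: A Boolean network (BN) with component set $[n]$ is $f:\{0,1\}^n\to\{0,1\}^n$; its signed interaction digraph has vertex set $[n]$ and a positive (negative) arc from $j$ to $i$ iff for some $x$ with $x_j=0$, $f_i(x+e_j)-f_i(x)$ is positive (negative). Cycles have no repeated vertices (loops are cycles), signed by the product of arc signs. $\mathcal{A}(n)$: BNs with component set $[n]$ whose interaction digraph is acyclic. $\mathcal{F}(n)$: BNs with component set $[n]$ with a unique fixed point and such that all cycles of the signed interaction digraph have the same sign. $\mathcal{F}^+(n)$: synchronizing BNs with component set $[n]$ whose signed interaction digraph has no negative cycles. A word $u$ contains $v$ if $v$ is obtained by deleting letters of $u$; $w$ is $n$-complete if it contains every permutation of $[n]$. $f^i(x)$ is $x$ with $x_i$ replaced by $f_i(x)$; $f^{i_1\cdots i_\ell}=f^{i_\ell}\circ\cdots\circ f^{i_1}$; $w$ synchronizes $f$ if $f^w$ is constant; $f$ is synchronizing if some word synchronizes it. *)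

theory Defs
  imports Main "HOL-Library.Sublist"
begin

text \<open>Components [n] are represented as 0,...,n-1. A configuration in {0,1}^n is a
  function nat => bool that is False outside {0..<n}.\<close>

type_synonym config = "nat \<Rightarrow> bool"

definition configs :: "nat \<Rightarrow> config set" where
  "configs n = {x. \<forall>i. n \<le> i \<longrightarrow> \<not> x i}"

text \<open>A Boolean network with component set [n]: maps configurations to configurations
  (only its values on configs n matter).\<close>
definition BN :: "nat \<Rightarrow> (config \<Rightarrow> config) \<Rightarrow> bool" where
  "BN n f \<longleftrightarrow> (\<forall>x\<in>configs n. f x \<in> configs n)"

text \<open>Signed arc from j to i; sign True = positive, False = negative.\<close>
definition signed_arc :: "nat \<Rightarrow> (config \<Rightarrow> config) \<Rightarrow> nat \<Rightarrow> nat \<Rightarrow> bool \<Rightarrow> bool" where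
  "signed_arc n f j i s \<longleftrightarrow> j < n \<and> i < n \<and>
     (\<exists>x\<in>configs n. \<not> x j \<and>
        (if s then \<not> f x i \<and> f (x(j := True)) i
              else f x i \<and> \<not> f (x(j := True)) i))"

definition is_cycle :: "nat \<Rightarrow> (config \<Rightarrow> config) \<Rightarrow> nat list \<Rightarrow> bool list \<Rightarrow> bool" where
  "is_cycle n f vs ss \<longleftrightarrow> vs \<noteq> [] \<and> distinct vs \<and> length ss = length vs \<and>
     (\<forall>t < length vs. signed_arc n f (vs ! t) (vs ! ((t + 1) mod length vs)) (ss ! t))"

definition positive_cycle :: "bool list \<Rightarrow> bool" where
  "positive_cycle ss \<longleftrightarrow> even (length (filter Not ss))"

definition acyclic_BN :: "nat \<Rightarrow> (config \<Rightarrow> config) \<Rightarrow> bool" where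
  "acyclic_BN n f \<longleftrightarrow> (\<nexists>vs ss. is_cycle n f vs ss)"

definition async_update :: "(config \<Rightarrow> config) \<Rightarrow> nat \<Rightarrow> config \<Rightarrow> config" where
  "async_update f i x = x(i := f x i)"

text \<open>f^{i_1...i_l} = f^{i_l} o ... o f^{i_1}: apply letters left to right.\<close>
fun word_update :: "(config \<Rightarrow> config) \<Rightarrow> nat list \<Rightarrow> config \<Rightarrow> config" where
  "word_update f [] x = x"
| "word_update f (i # w) x = word_update f w (async_update f i x)"

definition synchronizes :: "nat \<Rightarrow> nat list \<Rightarrow> (config \<Rightarrow> config) \<Rightarrow> bool" where
  "synchronizes n w f \<longleftrightarrow> (\<exists>c. \<forall>x\<in>configs n. word_update f w x = c)"

definition synchronizing :: "nat \<Rightarrow> (config \<Rightarrow> config) \<Rightarrow> bool" where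
  "synchronizing n f \<longleftrightarrow> (\<exists>w. set w \<subseteq> {0..<n} \<and> synchronizes n w f)"

definition class_A :: "nat \<Rightarrow> (config \<Rightarrow> config) set" where
  "class_A n = {f. BN n f \<and> acyclic_BN n f}"

definition class_F :: "nat \<Rightarrow> (config \<Rightarrow> config) set" where
  "class_F n = {f. BN n f \<and> (\<exists>!x. x \<in> configs n \<and> f x = x) \<and>
     ((\<forall>vs ss. is_cycle n f vs ss \<longrightarrow> positive_cycle ss) \<or>
      (\<forall>vs ss. is_cycle n f vs ss \<longrightarrow> \<not> positive_cycle ss))}"

definition class_F_plus :: "nat \<Rightarrow> (config \<Rightarrow> config) set" where
  "class_F_plus n = {f. BN n f \<and> synchronizing n f \<and>
     (\<forall>vs ss. is_cycle n f vs ss \<longrightarrow> positive_cycle ss)}"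

definition n_complete :: "nat \<Rightarrow> nat list \<Rightarrow> bool" where
  "n_complete n w \<longleftrightarrow> (\<forall>p. distinct p \<and> set p = {0..<n} \<longrightarrow> subseq p w)"

end

theory Submission
  imports Defs
begin

text \<open>A word complete for \<open>V\<close> splits, for any predecessor-closed \<open>R \<subseteq> V\<close>, into a part complete
  for \<open>R\<close> followed by a part complete for \<open>V - R\<close>. Since \<open>R\<close> evolves on its own, induction along
  this decomposition reduces synchronization to strongly connected networks. If all cycles are
  positive, such a network is balanced (Harary), hence monotone for a switched order, and the
  runs from the bottom and the top of that order squeeze every run to the fixed point. If all
  cycles are negative, a strongly connected network with a fixed point is a single vertex
  without loop. Uniqueness of the fixed point passes to the pieces, because without positive
  cycles there is at most one fixed point and without negative cycles fixed points extend.

  Conversely, if a permutation \<open>p\<close> is not a subsequence of \<open>w\<close>, the acyclic path network along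
  \<open>p\<close> is not synchronized by \<open>w\<close>. Acyclic networks belong to both \<open>\<F>(n)\<close> and \<open>\<F>\<^sup>+(n)\<close>.\<close>

section \<open>Walks and cycles in signed digraphs\<close>

text \<open>A signed digraph is a relation \<open>A j i s\<close>: there is an arc \<open>j \<rightarrow> i\<close> of sign \<open>s\<close> (\<open>True\<close> for
  positive). \<open>walk A vs ss\<close> passes through the vertices \<open>vs\<close> using arcs of signs \<open>ss\<close>.\<close>
fun walk :: "(nat \<Rightarrow> nat \<Rightarrow> bool \<Rightarrow> bool) \<Rightarrow> nat list \<Rightarrow> bool list \<Rightarrow> bool" where
  "walk A [v] [] = True"
| "walk A (u # v # vs) (s # ss) = (A u v s \<and> walk A (v # vs) ss)"
| "walk A _ _ = False"

definition cycle :: "(nat \<Rightarrow> nat \<Rightarrow> bool \<Rightarrow> bool) \<Rightarrow> nat list \<Rightarrow> bool list \<Rightarrow> bool" where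
  "cycle A vs ss \<longleftrightarrow> vs \<noteq> [] \<and> distinct vs \<and> walk A (vs @ [hd vs]) ss"

abbreviation neg_count :: "bool list \<Rightarrow> nat" where
  "neg_count ss \<equiv> length (filter Not ss)"

lemma walk_nonempty: "walk A vs ss \<Longrightarrow> vs \<noteq> []"
  by (induction A vs ss rule: walk.induct) auto

lemma walk_length: "walk A vs ss \<Longrightarrow> length vs = Suc (length ss)"
  by (induction A vs ss rule: walk.induct) auto

lemma walk_conv_nth:
  "walk A vs ss \<longleftrightarrow> length vs = Suc (length ss) \<and> (\<forall>t < length ss. A (vs ! t) (vs ! Suc t) (ss ! t))"
proof (induction ss arbitrary: vs)
  case Nil
  then show ?case by (cases "(A, vs, [] :: bool list)" rule: walk.cases) auto
next
  case (Cons s ss)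
  show ?case
  proof (cases "(A, vs, s # ss)" rule: walk.cases)
    case (2 _ u v vs')
    then show ?thesis using Cons.IH[of "v # vs'"] by (auto simp: All_less_Suc2)
  qed (auto simp: length_Suc_conv)
qed

lemma walk_mono: "walk A vs ss \<Longrightarrow> (\<And>j i s. A j i s \<Longrightarrow> B j i s) \<Longrightarrow> walk B vs ss"
  by (induction A vs ss rule: walk.induct) auto

lemma walk_append:
  "walk A vs1 ss1 \<Longrightarrow> walk A vs2 ss2 \<Longrightarrow> last vs1 = hd vs2 \<Longrightarrow> walk A (vs1 @ tl vs2) (ss1 @ ss2)"
proof (induction A vs1 ss1 rule: walk.induct)
  case (1 A v)
  then show ?case by (cases vs2) auto
qed auto

lemma walk_split:
  "walk A (xs @ m # ys) ss \<Longrightarrow> \<exists>ss1 ss2. ss = ss1 @ ss2 \<and> walk A (xs @ [m]) ss1 \<and> walk A (m # ys) ss2"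
proof (induction xs arbitrary: ss)
  case (Cons a xs)
  then obtain s ss' where ss: "ss = s # ss'" "A a (hd (xs @ [m])) s" "walk A (xs @ m # ys) ss'"
    by (cases xs; cases ss) auto
  with Cons.IH obtain ss1 ss2 where "ss' = ss1 @ ss2" "walk A (xs @ [m]) ss1" "walk A (m # ys) ss2"
    by blast
  with ss show ?case by (intro exI[of _ "s # ss1"] exI[of _ ss2]) (cases xs; auto)
qed force

lemma walk_last_in:
  "walk A vs ss \<Longrightarrow> (\<And>j i s. A j i s \<Longrightarrow> j \<in> V \<and> i \<in> V) \<Longrightarrow> hd vs \<in> V \<Longrightarrow> last vs \<in> V"
  by (induction A vs ss rule: walk.induct) auto

lemma cycle_mono: "cycle A vs ss \<Longrightarrow> (\<And>j i s. A j i s \<Longrightarrow> B j i s) \<Longrightarrow> cycle B vs ss"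
  unfolding cycle_def using walk_mono by blast

lemma nth_append_hd_Suc:
  assumes "t < length vs"
  shows "(vs @ [hd vs]) ! Suc t = vs ! ((t + 1) mod length vs)"
proof (cases "Suc t < length vs")
  case False
  then have "Suc t = length vs" using assms by simp
  then show ?thesis using assms by (cases vs) (auto simp: nth_append)
qed (simp add: nth_append)

lemma cycle_conv_nth:
  "cycle A vs ss \<longleftrightarrow> vs \<noteq> [] \<and> distinct vs \<and> length ss = length vs \<and>
     (\<forall>t < length vs. A (vs ! t) (vs ! ((t + 1) mod length vs)) (ss ! t))"
proof -
  have "A ((vs @ [hd vs]) ! t) ((vs @ [hd vs]) ! Suc t) s =
      A (vs ! t) (vs ! ((t + 1) mod length vs)) s"
    if "t < length vs" for t s
    using that by (simp add: nth_append_hd_Suc) (simp add: nth_append)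
  then show ?thesis unfolding cycle_def walk_conv_nth by auto
qed

text \<open>Removing a closed subwalk splits the negative arcs between two shorter closed walks.\<close>
lemma closed_walk_cycle:
  assumes "walk A vs ss" "hd vs = last vs" "ss \<noteq> []"
  shows "\<exists>cs ts. cycle A cs ts \<and> (odd (neg_count ss) \<longrightarrow> odd (neg_count ts))"
  using assms
proof (induction "length vs" arbitrary: vs ss rule: less_induct)
  case less
  have "length vs \<ge> 2" using walk_length[OF less.prems(1)] less.prems(3) by (cases ss) auto
  then obtain cs v where vs: "vs = cs @ [v]" "cs \<noteq> []"
    by (cases vs rule: rev_cases) force+
  have hd: "hd cs = v" using less.prems(2) vs by simp
  show ?case
  proof (cases "distinct cs")
    case True
    then show ?thesis using less.prems(1) vs hd unfolding cycle_def by auto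
  next
    case False
    then obtain xs ys zs m where cs: "cs = xs @ [m] @ ys @ [m] @ zs"
      using not_distinct_decomp by blast
    have "walk A (xs @ m # ys @ m # zs @ [v]) ss" using less.prems(1) vs cs by simp
    then obtain ss1 ss' where
      ss: "ss = ss1 @ ss'" "walk A (xs @ [m]) ss1" "walk A (m # ys @ m # zs @ [v]) ss'"
      using walk_split by blast
    obtain ss2 ss3 where
      ss': "ss' = ss2 @ ss3" "walk A (m # ys @ [m]) ss2" "walk A (m # zs @ [v]) ss3"
      using walk_split[of A "m # ys" m "zs @ [v]" ss'] ss(3) by auto
    have inner: "walk A (xs @ m # zs @ [v]) (ss1 @ ss3)"
      using walk_append[OF ss(2) ss'(3)] by simp
    have "ss2 \<noteq> []" "ss1 @ ss3 \<noteq> []"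
      using walk_length[OF ss'(2)] walk_length[OF ss'(3)] by auto
    moreover have "hd (xs @ m # zs @ [v]) = last (xs @ m # zs @ [v])"
      using hd cs by (cases xs) auto
    ultimately obtain c1 t1 c2 t2 where
      "cycle A c1 t1" "odd (neg_count ss2) \<longrightarrow> odd (neg_count t1)"
      "cycle A c2 t2" "odd (neg_count (ss1 @ ss3)) \<longrightarrow> odd (neg_count t2)"
      using less.hyps[of "m # ys @ [m]" ss2, OF _ ss'(2)]
        less.hyps[of "xs @ m # zs @ [v]" "ss1 @ ss3", OF _ inner]
      unfolding vs cs by auto
    moreover have "neg_count ss = neg_count ss2 + neg_count (ss1 @ ss3)" using ss ss' by simp
    ultimately show ?thesis by (cases "odd (neg_count ss2)") auto
  qed
qed

lemma walk_parity_potential: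
  fixes g :: "nat \<Rightarrow> bool"
  shows "walk A vs ss \<Longrightarrow> (\<And>j i s. A j i s \<Longrightarrow> s = (g j = g i)) \<Longrightarrow>
    even (neg_count ss) = (g (hd vs) = g (last vs))"
proof (induction A vs ss rule: walk.induct)
  case (2 A u v vs s ss)
  then show ?case by (cases s) auto
qed auto

lemma cycle_positive_potential:
  fixes g :: "nat \<Rightarrow> bool"
  shows "cycle A vs ss \<Longrightarrow> (\<And>j i s. A j i s \<Longrightarrow> s = (g j = g i)) \<Longrightarrow> positive_cycle ss"
  unfolding cycle_def positive_cycle_def using walk_parity_potential[of A "vs @ [hd vs]" ss g]
  by (simp add: hd_append)

lemma long_backward_walk:
  assumes "\<And>i. i \<in> D \<Longrightarrow> \<exists>j\<in>D. \<exists>s. A j i s" "i0 \<in> D"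
  shows "\<exists>vs ss. walk A vs ss \<and> length vs = Suc k \<and> set vs \<subseteq> D"
proof (induction k)
  case 0
  then show ?case using assms(2) by (intro exI[of _ "[i0]"] exI[of _ "[]"]) auto
next
  case (Suc k)
  then obtain u vs ss where v: "walk A (u # vs) ss" "length (u # vs) = Suc k" "set (u # vs) \<subseteq> D"
    by (metis walk_nonempty neq_Nil_conv)
  then obtain j s where "j \<in> D" "A j u s" using assms(1) by force
  then show ?case using v by (intro exI[of _ "j # u # vs"] exI[of _ "s # ss"]) auto
qed

text \<open>Pigeonhole: a backward walk longer than \<open>card D\<close> repeats a vertex.\<close>
lemma cycle_if_in_arcs:
  assumes "finite D" "D \<noteq> {}" "\<And>i. i \<in> D \<Longrightarrow> \<exists>j\<in>D. \<exists>s. A j i s"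
  shows "\<exists>cs ts. cycle A cs ts"
proof -
  obtain i0 where "i0 \<in> D" using assms(2) by auto
  then obtain vs ss where v: "walk A vs ss" "length vs = Suc (card D)" "set vs \<subseteq> D"
    using long_backward_walk[of D A i0 "card D", OF assms(3)] by blast
  have "\<not> distinct vs"
    using v assms(1) by (metis card_mono distinct_card not_less_eq_eq order_refl)
  then obtain xs ys zs m where "vs = xs @ [m] @ ys @ [m] @ zs"
    using not_distinct_decomp by blast
  then obtain ss2 where ss2: "walk A (m # ys @ [m]) ss2"
    using walk_split[of A xs m "ys @ m # zs"] walk_split[of A "m # ys" m zs] v(1) by fastforce
  moreover have "ss2 \<noteq> []" using walk_length[OF ss2] by auto
  ultimately show ?thesis using closed_walk_cycle[of A "m # ys @ [m]" ss2] by auto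
qed

lemma walk_rank_increasing:
  fixes r :: "nat \<Rightarrow> nat"
  shows "walk A vs ss \<Longrightarrow> (\<And>j i s. A j i s \<Longrightarrow> r j < r i) \<Longrightarrow> r (hd vs) + length ss \<le> r (last vs)"
proof (induction A vs ss rule: walk.induct)
  case (2 A u v vs s ss)
  have "A u v s" using "2.prems"(1) by simp
  then have "r u < r v" using "2.prems"(2) by blast
  then show ?case using "2.IH" "2.prems" by simp
qed auto

lemma no_cycle_if_rank:
  fixes r :: "nat \<Rightarrow> nat"
  assumes "\<And>j i s. A j i s \<Longrightarrow> r j < r i"
  shows "\<not> cycle A vs ss"
proof
  assume "cycle A vs ss"
  then have c: "walk A (vs @ [hd vs]) ss" "vs \<noteq> []" unfolding cycle_def by auto
  then have "length ss = length vs" using walk_length[OF c(1)] by simp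
  with c show False using walk_rank_increasing[OF c(1) assms] by simp
qed

definition connects :: "(nat \<Rightarrow> nat \<Rightarrow> bool \<Rightarrow> bool) \<Rightarrow> nat \<Rightarrow> nat \<Rightarrow> bool list \<Rightarrow> bool" where
  "connects A u v ss \<longleftrightarrow> (\<exists>vs. walk A vs ss \<and> hd vs = u \<and> last vs = v)"

lemma connects_Nil: "connects A v v []"
  unfolding connects_def by (intro exI[of _ "[v]"]) simp

lemma connects_Cons: "A u v s \<Longrightarrow> connects A v w ss \<Longrightarrow> connects A u w (s # ss)"
  unfolding connects_def
  by (metis last_ConsR list.sel(1) walk.simps(2) walk_nonempty list.exhaust_sel)

lemma connects_append: "connects A u v ss1 \<Longrightarrow> connects A v w ss2 \<Longrightarrow> connects A u w (ss1 @ ss2)"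
  unfolding connects_def
  by (metis walk_append walk_nonempty hd_append2 last_appendR last_tl list.collapse append_Nil2
      last_snoc)

lemma connects_snoc: "connects A u v ss \<Longrightarrow> A v w s \<Longrightarrow> connects A u w (ss @ [s])"
  using connects_append connects_Cons connects_Nil by metis

lemma connects_in: "connects A u v ss \<Longrightarrow> (\<And>j i s. A j i s \<Longrightarrow> j \<in> V \<and> i \<in> V) \<Longrightarrow> u \<in> V \<Longrightarrow> v \<in> V"
  unfolding connects_def using walk_last_in by metis

lemma closed_connects_cycle:
  "connects A v v ss \<Longrightarrow> odd (neg_count ss) \<Longrightarrow> \<exists>cs ts. cycle A cs ts \<and> odd (neg_count ts)"
  unfolding connects_def using closed_walk_cycle by fastforce

section \<open>Subnetworks with frozen components\<close>

text \<open>\<open>cube V b\<close> is the state space of the subnetwork on \<open>V\<close> whose other components are frozen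
  to \<open>b\<close>; \<open>local_arc\<close> is its signed interaction digraph.\<close>
definition cube :: "nat set \<Rightarrow> config \<Rightarrow> config set" where
  "cube V b = {x. \<forall>i. i \<notin> V \<longrightarrow> x i = b i}"

definition local_arc :: "(config \<Rightarrow> config) \<Rightarrow> nat set \<Rightarrow> config \<Rightarrow> nat \<Rightarrow> nat \<Rightarrow> bool \<Rightarrow> bool" where
  "local_arc f V b j i s \<longleftrightarrow> j \<in> V \<and> i \<in> V \<and>
     (\<exists>x\<in>cube V b. \<not> x j \<and>
        (if s then \<not> f x i \<and> f (x(j := True)) i
              else f x i \<and> \<not> f (x(j := True)) i))"

definition fixed_on :: "(config \<Rightarrow> config) \<Rightarrow> nat set \<Rightarrow> config \<Rightarrow> bool" where
  "fixed_on f V x \<longleftrightarrow> (\<forall>i\<in>V. f x i = x i)"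

definition unique_fixed_point :: "(config \<Rightarrow> config) \<Rightarrow> nat set \<Rightarrow> config \<Rightarrow> config \<Rightarrow> bool" where
  "unique_fixed_point f V b z \<longleftrightarrow>
     z \<in> cube V b \<and> fixed_on f V z \<and> (\<forall>y\<in>cube V b. fixed_on f V y \<longrightarrow> y = z)"

definition pred_closed :: "(config \<Rightarrow> config) \<Rightarrow> nat set \<Rightarrow> config \<Rightarrow> nat set \<Rightarrow> bool" where
  "pred_closed f V b R \<longleftrightarrow> (\<forall>i\<in>R. \<forall>j s. local_arc f V b j i s \<longrightarrow> j \<in> R)"

definition strongly_connected :: "(config \<Rightarrow> config) \<Rightarrow> nat set \<Rightarrow> config \<Rightarrow> bool" where
  "strongly_connected f V b \<longleftrightarrow> (\<forall>R\<subseteq>V. R \<noteq> {} \<longrightarrow> pred_closed f V b R \<longrightarrow> R = V)"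

definition all_cycles_positive :: "(config \<Rightarrow> config) \<Rightarrow> nat set \<Rightarrow> config \<Rightarrow> bool" where
  "all_cycles_positive f V b \<longleftrightarrow> (\<forall>vs ss. cycle (local_arc f V b) vs ss \<longrightarrow> positive_cycle ss)"

definition all_cycles_negative :: "(config \<Rightarrow> config) \<Rightarrow> nat set \<Rightarrow> config \<Rightarrow> bool" where
  "all_cycles_negative f V b \<longleftrightarrow> (\<forall>vs ss. cycle (local_arc f V b) vs ss \<longrightarrow> \<not> positive_cycle ss)"

lemma self_in_cube [simp]: "b \<in> cube V b"
  unfolding cube_def by simp

lemma cube_empty: "cube {} b = {b}"
  unfolding cube_def by auto

lemma cube_upd: "x \<in> cube V b \<Longrightarrow> j \<in> V \<Longrightarrow> x(j := c) \<in> cube V b"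
  unfolding cube_def by auto

lemma cube_subset: "S \<subseteq> V \<Longrightarrow> z \<in> cube V b \<Longrightarrow> cube S z \<subseteq> cube V b"
  unfolding cube_def by auto

lemma cube_eqI:
  assumes "x \<in> cube V b" "y \<in> cube V b" "\<And>i. i \<in> V \<Longrightarrow> x i = y i"
  shows "x = y"
proof
  show "x i = y i" for i using assms unfolding cube_def by (cases "i \<in> V") auto
qed

lemma local_arc_in: "local_arc f V b j i s \<Longrightarrow> j \<in> V \<and> i \<in> V"
  unfolding local_arc_def by auto

lemma local_arc_subset: "S \<subseteq> V \<Longrightarrow> z \<in> cube V b \<Longrightarrow> local_arc f S z j i s \<Longrightarrow> local_arc f V b j i s"
  unfolding local_arc_def using cube_subset by blast

lemma all_cycles_positive_subset:
  "S \<subseteq> V \<Longrightarrow> z \<in> cube V b \<Longrightarrow> all_cycles_positive f V b \<Longrightarrow> all_cycles_positive f S z"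
  unfolding all_cycles_positive_def
  using cycle_mono[of "local_arc f S z" _ _ "local_arc f V b"] local_arc_subset by blast

lemma all_cycles_negative_subset:
  "S \<subseteq> V \<Longrightarrow> z \<in> cube V b \<Longrightarrow> all_cycles_negative f V b \<Longrightarrow> all_cycles_negative f S z"
  unfolding all_cycles_negative_def
  using cycle_mono[of "local_arc f S z" _ _ "local_arc f V b"] local_arc_subset by blast

text \<open>Walking from \<open>x\<close> to \<open>y\<close> one coordinate at a time, some single flip changes \<open>g\<close>.\<close>
lemma cube_flip:
  fixes g :: "config \<Rightarrow> bool"
  assumes "finite V" "x \<in> cube V b" "y \<in> cube V b" "g x \<noteq> g y"
  shows "\<exists>u j. j \<in> V \<and> x j \<noteq> y j \<and> u \<in> cube V b \<and> u j = x j \<and> g u = g x \<and> g (u(j := \<not> u j)) = g y"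
  using assms(2-4)
proof (induction "card {k\<in>V. x k \<noteq> y k}" arbitrary: x rule: less_induct)
  case less
  obtain j0 where j0: "j0 \<in> V" "x j0 \<noteq> y j0"
    using cube_eqI[OF less.prems(1,2)] less.prems(3) by blast
  define x' where "x' = x(j0 := y j0)"
  have x': "x' \<in> cube V b" unfolding x'_def using cube_upd[OF less.prems(1) j0(1)] .
  show ?case
  proof (cases "g x' = g x")
    case False
    then show ?thesis using j0 less.prems(1,3) unfolding x'_def
      by (intro exI[of _ x] exI[of _ j0]) auto
  next
    case True
    have "card ({k\<in>V. x k \<noteq> y k} - {j0}) < card {k\<in>V. x k \<noteq> y k}"
      by (rule card_Diff1_less) (use assms(1) j0 in auto)
    moreover have "{k\<in>V. x k \<noteq> y k} - {j0} = {k\<in>V. x' k \<noteq> y k}" unfolding x'_def by auto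
    ultimately have "card {k\<in>V. x' k \<noteq> y k} < card {k\<in>V. x k \<noteq> y k}" by simp
    moreover have "g x' \<noteq> g y" using True less.prems(3) by simp
    ultimately obtain u j where "j \<in> V" "x' j \<noteq> y j" "u \<in> cube V b" "u j = x' j" "g u = g x'"
        "g (u(j := \<not> u j)) = g y"
      using less.hyps[OF _ x' less.prems(2)] by blast
    moreover have "x' j = x j" using \<open>x' j \<noteq> y j\<close> unfolding x'_def by (cases "j = j0") auto
    ultimately show ?thesis using True by (intro exI[of _ u] exI[of _ j]) auto
  qed
qed

lemma local_arcI:
  assumes "x \<in> cube V b" "j \<in> V" "i \<in> V" "\<not> x j" "f x i \<noteq> f (x(j := True)) i"
  shows "local_arc f V b j i (f (x(j := True)) i)"
  unfolding local_arc_def using assms by (intro conjI bexI[of _ x]) auto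

lemma local_arc_if_differ:
  assumes "finite V" "x \<in> cube V b" "y \<in> cube V b" "i \<in> V" "f x i \<noteq> f y i"
  shows "\<exists>j\<in>V. x j \<noteq> y j \<and> local_arc f V b j i (if x j then f x i else f y i)"
proof -
  obtain u j where u: "j \<in> V" "x j \<noteq> y j" "u \<in> cube V b" "u j = x j" "f u i = f x i"
      "f (u(j := \<not> u j)) i = f y i"
    using cube_flip[OF assms(1-3), of "\<lambda>z. f z i"] assms(5) by blast
  define lo where "lo = u(j := False)"
  have lo: "lo \<in> cube V b" "\<not> lo j" unfolding lo_def using cube_upd[OF u(3,1)] by auto
  have "f lo i \<noteq> f (lo(j := True)) i \<and> f (lo(j := True)) i = (if x j then f x i else f y i)"
  proof (cases "x j")
    case True
    then have "lo = u(j := \<not> u j)" "lo(j := True) = u"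
      using u(4) unfolding lo_def by (auto simp: fun_upd_idem_iff)
    then show ?thesis using True u(5,6) assms(5) by simp
  next
    case False
    then have "lo = u" "lo(j := True) = u(j := \<not> u j)"
      using u(4) unfolding lo_def by (auto simp: fun_upd_idem_iff)
    then show ?thesis using False u(5,6) assms(5) by simp
  qed
  then have "local_arc f V b j i (if x j then f x i else f y i)"
    using local_arcI[of lo V b j i f, OF lo(1) u(1) assms(4) lo(2)] by simp
  then show ?thesis using u(1,2) by blast
qed

lemma eq_if_agree_on_in_arcs:
  assumes "finite V" "i \<in> V" "\<And>j s. local_arc f V b j i s \<Longrightarrow> j \<in> R"
    "x \<in> cube V b" "y \<in> cube V b" "\<And>k. k \<in> R \<Longrightarrow> x k = y k"
  shows "f x i = f y i"
proof (rule ccontr)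
  assume "f x i \<noteq> f y i"
  then obtain j where "x j \<noteq> y j" "local_arc f V b j i (if x j then f x i else f y i)"
    using local_arc_if_differ[where f=f, OF assms(1,4,5,2)] by blast
  then show False using assms(3,6) by blast
qed

lemma pred_closed_agree:
  assumes "finite V" "R \<subseteq> V" "pred_closed f V b R" "i \<in> R"
    "x \<in> cube V b" "y \<in> cube V b" "\<And>k. k \<in> R \<Longrightarrow> x k = y k"
  shows "f x i = f y i"
proof (rule eq_if_agree_on_in_arcs[where f=f, OF assms(1) _ _ assms(5-7)])
  show "i \<in> V" using assms(2,4) by blast
  show "j \<in> R" if "local_arc f V b j i s" for j s
    using assms(3,4) that unfolding pred_closed_def by blast
qed

lemma word_update_append: "word_update f (u @ v) x = word_update f v (word_update f u x)"
  by (induction u arbitrary: x) auto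

lemma word_update_in_cube: "x \<in> cube V b \<Longrightarrow> set w \<subseteq> V \<Longrightarrow> word_update f w x \<in> cube V b"
  by (induction w arbitrary: x) (auto simp: async_update_def cube_upd)

lemma word_update_fixed: "fixed_on f V z \<Longrightarrow> set w \<subseteq> V \<Longrightarrow> word_update f w z = z"
  by (induction w) (auto simp: async_update_def fixed_on_def)

section \<open>Complete words\<close>

definition complete_for :: "nat set \<Rightarrow> nat list \<Rightarrow> bool" where
  "complete_for V w \<longleftrightarrow> (\<forall>p. distinct p \<and> set p = V \<longrightarrow> subseq p w)"

lemma complete_for_filter: "complete_for V w \<Longrightarrow> (\<And>i. i \<in> V \<Longrightarrow> P i) \<Longrightarrow> complete_for V (filter P w)"
  unfolding complete_for_def by (metis filter_True subseq_filter)

lemma complete_for_append_left: "complete_for V w \<Longrightarrow> complete_for V (u @ w)"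
  unfolding complete_for_def by auto

lemma complete_for_subset:
  assumes "finite V" "R \<subseteq> V" "complete_for V w"
  shows "complete_for R w"
  unfolding complete_for_def
proof (intro allI impI)
  fix p assume p: "distinct p \<and> set p = R"
  define q where "q = sorted_list_of_set (V - R)"
  have "distinct (p @ q) \<and> set (p @ q) = V" using assms(1,2) p unfolding q_def by auto
  then have "subseq (p @ q) w" using assms(3) unfolding complete_for_def by blast
  then show "subseq p w" using list_emb_appendD by fastforce
qed

lemma complete_for_Nil: "finite R \<Longrightarrow> complete_for R [] \<Longrightarrow> R = {}"
  unfolding complete_for_def
  by (metis distinct_sorted_list_of_set list_emb_Nil2 set_empty set_sorted_list_of_set)

text \<open>Cut \<open>w\<close> after the shortest prefix that is complete for \<open>R\<close>: a permutation of \<open>R\<close> that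
  is not a subsequence of the prefix minus its last letter, followed by any permutation of
  \<open>V - R\<close>, shows that the remainder is complete for \<open>V - R\<close>.\<close>
lemma complete_for_split:
  assumes "finite V" "R \<subseteq> V" "complete_for V w"
  obtains w1 w2 where "w = w1 @ w2" "complete_for R w1" "complete_for (V - R) w2"
proof -
  have ex: "\<exists>k. complete_for R (take k w)"
    using complete_for_subset[OF assms] by (intro exI[of _ "length w"]) simp
  define k where "k = (LEAST k. complete_for R (take k w))"
  have ck: "complete_for R (take k w)" unfolding k_def by (rule LeastI_ex[OF ex])
  show ?thesis
  proof (cases k)
    case 0
    then have "R = {}" using ck complete_for_Nil assms(1,2) finite_subset by auto
    then show ?thesis using that[of "[]" w] assms(3) ck 0 by simp
  next
    case (Suc k')
    then have "\<not> complete_for R (take k' w)" unfolding k_def using not_less_Least by (metis lessI)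
    then obtain p where p: "distinct p" "set p = R" "\<not> subseq p (take k' w)"
      unfolding complete_for_def by blast
    have "complete_for (V - R) (drop k w)"
      unfolding complete_for_def
    proof (intro allI impI)
      fix q assume "distinct q \<and> set q = V - R"
      then have "distinct (p @ q) \<and> set (p @ q) = V" using p assms(2) by auto
      then have "subseq (p @ q) w" using assms(3) unfolding complete_for_def by auto
      then obtain us vs where uv: "w = us @ vs" "subseq p us" "subseq q vs"
        using list_emb_appendD by blast
      have "k' < length us"
      proof (rule ccontr)
        assume "\<not> k' < length us"
        then have "subseq us (take k' w)" using uv(1) by (simp add: list_emb_prefix)
        then show False using uv(2) p(3) subseq_order.trans by blast
      qed
      then have "drop k w = drop k us @ vs" using uv(1) Suc by simp
      then show "subseq q (drop k w)" using uv(3) by (metis list_emb_append2)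
    qed
    then show ?thesis using that[of "take k w" "drop k w"] ck by simp
  qed
qed

lemma complete_for_decomp:
  assumes "finite V" "i \<in> V" "complete_for V w"
  obtains u w' where "w = u @ i # w'" "complete_for (V - {i}) w'"
proof -
  obtain w1 w2 where w: "w = w1 @ w2" "complete_for {i} w1" "complete_for (V - {i}) w2"
    using complete_for_split[OF assms(1) _ assms(3), of "{i}"] assms(2) by auto
  have "subseq [i] w1" using w(2) unfolding complete_for_def by auto
  then obtain u v where "w1 = u @ i # v" by (meson split_list subseq_singleton_left)
  then show ?thesis using that[of u "v @ w2"] w complete_for_append_left[OF w(3)] by simp
qed

section \<open>Balanced networks\<close>

text \<open>In \<open>sw_le \<sigma> V\<close> the value \<open>\<sigma> i\<close> is the bottom of coordinate \<open>i\<close>. If \<open>\<sigma>\<close> balances \<open>f\<close>, the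
  network is monotone for this order.\<close>
definition sw_le :: "(nat \<Rightarrow> bool) \<Rightarrow> nat set \<Rightarrow> config \<Rightarrow> config \<Rightarrow> bool" where
  "sw_le \<sigma> V x y \<longleftrightarrow> (\<forall>i\<in>V. x i \<noteq> \<sigma> i \<longrightarrow> y i \<noteq> \<sigma> i)"

definition balanced :: "(config \<Rightarrow> config) \<Rightarrow> nat set \<Rightarrow> config \<Rightarrow> (nat \<Rightarrow> bool) \<Rightarrow> bool" where
  "balanced f V b \<sigma> \<longleftrightarrow> (\<forall>j i s. local_arc f V b j i s \<longrightarrow> s = (\<sigma> j = \<sigma> i))"

definition sw_bottom :: "(nat \<Rightarrow> bool) \<Rightarrow> nat set \<Rightarrow> config \<Rightarrow> config" where
  "sw_bottom \<sigma> V b = (\<lambda>k. if k \<in> V then \<sigma> k else b k)"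

lemma sw_le_refl: "sw_le \<sigma> V x x"
  unfolding sw_le_def by blast

lemma sw_le_trans: "sw_le \<sigma> V x y \<Longrightarrow> sw_le \<sigma> V y z \<Longrightarrow> sw_le \<sigma> V x z"
  unfolding sw_le_def by blast

lemma sw_le_antisym: "sw_le \<sigma> V x y \<Longrightarrow> sw_le \<sigma> V y x \<Longrightarrow> x \<in> cube V b \<Longrightarrow> y \<in> cube V b \<Longrightarrow> x = y"
  unfolding sw_le_def by (rule cube_eqI) blast+

lemma sw_le_neg: "sw_le (\<lambda>k. \<not> \<sigma> k) V x y \<longleftrightarrow> sw_le \<sigma> V y x"
  unfolding sw_le_def by auto

lemma balanced_neg: "balanced f V b \<sigma> \<Longrightarrow> balanced f V b (\<lambda>k. \<not> \<sigma> k)"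
  unfolding balanced_def by auto

lemma sw_bottom_in_cube: "sw_bottom \<sigma> V b \<in> cube V b"
  unfolding sw_bottom_def cube_def by simp

lemma sw_bottom_le: "sw_le \<sigma> V (sw_bottom \<sigma> V b) x"
  unfolding sw_bottom_def sw_le_def by simp

lemma balanced_monotone:
  assumes "finite V" "balanced f V b \<sigma>" "x \<in> cube V b" "y \<in> cube V b" "sw_le \<sigma> V x y" "i \<in> V"
    "f x i \<noteq> \<sigma> i"
  shows "f y i \<noteq> \<sigma> i"
proof
  assume fy: "f y i = \<sigma> i"
  then have "f x i \<noteq> f y i" using assms(7) by simp
  then obtain j where j: "j \<in> V" "x j \<noteq> y j" "local_arc f V b j i (if x j then f x i else f y i)"
    using local_arc_if_differ[where f=f, OF assms(1,3,4,6)] by blast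
  then have "x j = \<sigma> j" using assms(5) unfolding sw_le_def by auto
  moreover have "(if x j then f x i else f y i) = (\<sigma> j = \<sigma> i)"
    using j(3) assms(2) unfolding balanced_def by blast
  ultimately show False using assms(7) fy by (cases "x j") auto
qed

lemma balanced_monotone_update:
  assumes "finite V" "balanced f V b \<sigma>" "x \<in> cube V b" "y \<in> cube V b" "sw_le \<sigma> V x y" "i \<in> V"
  shows "sw_le \<sigma> V (async_update f i x) (async_update f i y)"
  using assms balanced_monotone[OF assms(1-5)] unfolding sw_le_def async_update_def by auto

lemma balanced_monotone_word:
  assumes "finite V" "balanced f V b \<sigma>" "x \<in> cube V b" "y \<in> cube V b" "sw_le \<sigma> V x y" "set w \<subseteq> V"
  shows "sw_le \<sigma> V (word_update f w x) (word_update f w y)"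
  using assms(3-6)
proof (induction w arbitrary: x y)
  case (Cons i w)
  have "async_update f i x \<in> cube V b" "async_update f i y \<in> cube V b"
    using Cons.prems cube_upd unfolding async_update_def by auto
  then show ?case
    using Cons.IH balanced_monotone_update[OF assms(1,2) Cons.prems(1-3)] Cons.prems(4) by simp
qed simp

lemma balanced_update_increasing:
  assumes "finite V" "balanced f V b \<sigma>" "x \<in> cube V b" "sw_le \<sigma> V x (f x)" "i \<in> V"
  shows "sw_le \<sigma> V x (async_update f i x) \<and> sw_le \<sigma> V (async_update f i x) (f (async_update f i x))"
proof
  let ?y = "async_update f i x"
  show le: "sw_le \<sigma> V x ?y" using assms(4) unfolding sw_le_def async_update_def by auto
  have "f x k \<noteq> \<sigma> k" if "k \<in> V" "?y k \<noteq> \<sigma> k" for k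
    using that assms(4) unfolding sw_le_def async_update_def by (cases "k = i") auto
  then show "sw_le \<sigma> V ?y (f ?y)"
    using balanced_monotone[OF assms(1-3) _ le] cube_upd[OF assms(3,5)]
    unfolding sw_le_def async_update_def by blast
qed

lemma balanced_word_increasing:
  assumes "finite V" "balanced f V b \<sigma>" "x \<in> cube V b" "sw_le \<sigma> V x (f x)" "set w \<subseteq> V"
  shows "sw_le \<sigma> V x (word_update f w x) \<and> sw_le \<sigma> V (word_update f w x) (f (word_update f w x))"
  using assms(3-5)
proof (induction w arbitrary: x)
  case (Cons i w)
  let ?x = "async_update f i x"
  have "?x \<in> cube V b"
    using cube_upd[OF Cons.prems(1)] Cons.prems(3) unfolding async_update_def by simp
  moreover have step: "sw_le \<sigma> V x ?x" "sw_le \<sigma> V ?x (f ?x)"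
    using balanced_update_increasing[OF assms(1,2) Cons.prems(1,2)] Cons.prems(3) by auto
  ultimately have "sw_le \<sigma> V ?x (word_update f w ?x) \<and>
      sw_le \<sigma> V (word_update f w ?x) (f (word_update f w ?x))"
    using Cons.IH Cons.prems(3) by simp
  then show ?case using sw_le_trans[OF step(1)] by simp
qed (simp add: sw_le_refl)

lemma unfixed_below_image:
  "sw_le \<sigma> V y (f y) \<Longrightarrow> i \<in> V \<Longrightarrow> f y i \<noteq> y i \<Longrightarrow> y i = \<sigma> i \<and> f y i \<noteq> \<sigma> i"
  unfolding sw_le_def by auto

text \<open>Induction on the coordinates still at their bottom value: the first occurrence in \<open>w\<close> of
  an unstable such coordinate lifts it for good.\<close>
lemma balanced_sync_from_below:
  assumes "finite V" "balanced f V b \<sigma>" "unique_fixed_point f V b z"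
  shows "y \<in> cube V b \<Longrightarrow> sw_le \<sigma> V y (f y) \<Longrightarrow> set w \<subseteq> V \<Longrightarrow>
    complete_for {i\<in>V. y i = \<sigma> i} w \<Longrightarrow> word_update f w y = z"
proof (induction "card {i\<in>V. y i = \<sigma> i}" arbitrary: y w rule: less_induct)
  case less
  show ?case
  proof (cases "fixed_on f V y")
    case True
    then have "y = z" using assms(3) less.prems(1) unfolding unique_fixed_point_def by blast
    then show ?thesis using assms(3) word_update_fixed[OF _ less.prems(3)]
      unfolding unique_fixed_point_def by blast
  next
    case False
    then obtain i where i: "i \<in> V" "y i = \<sigma> i" "f y i \<noteq> \<sigma> i"
      using unfixed_below_image[where f=f, OF less.prems(2)] unfolding fixed_on_def by blast
    have "finite {k\<in>V. y k = \<sigma> k}" "i \<in> {k\<in>V. y k = \<sigma> k}" using assms(1) i by auto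
    then obtain u w' where uw: "w = u @ i # w'" "complete_for ({k\<in>V. y k = \<sigma> k} - {i}) w'"
      using complete_for_decomp less.prems(4) by blast
    have u: "set u \<subseteq> V" "set (u @ [i]) \<subseteq> V" "set w' \<subseteq> V" using less.prems(3) uw(1) by auto
    define y2 where "y2 = word_update f (u @ [i]) y"
    have y2: "y2 \<in> cube V b" "sw_le \<sigma> V y y2" "sw_le \<sigma> V y2 (f y2)"
      using word_update_in_cube[OF less.prems(1) u(2)]
        balanced_word_increasing[OF assms(1,2) less.prems(1,2) u(2)] unfolding y2_def by auto
    have "f (word_update f u y) i \<noteq> \<sigma> i"
      using balanced_monotone[OF assms(1,2) less.prems(1) word_update_in_cube[OF less.prems(1) u(1)]
          _ i(1,3)]
        balanced_word_increasing[OF assms(1,2) less.prems(1,2) u(1)] by blast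
    then have "y2 i \<noteq> \<sigma> i" unfolding y2_def by (simp add: word_update_append async_update_def)
    then have sub: "{k\<in>V. y2 k = \<sigma> k} \<subseteq> {k\<in>V. y k = \<sigma> k} - {i}"
      using y2(2) unfolding sw_le_def by blast
    have "card ({k\<in>V. y k = \<sigma> k} - {i}) < card {k\<in>V. y k = \<sigma> k}"
      using assms(1) i by (intro card_Diff1_less) auto
    then have "card {k\<in>V. y2 k = \<sigma> k} < card {k\<in>V. y k = \<sigma> k}"
      using card_mono[OF _ sub] assms(1) by simp
    moreover have "complete_for {k\<in>V. y2 k = \<sigma> k} w'"
      using complete_for_subset[OF _ sub uw(2)] assms(1) by simp
    ultimately have "word_update f w' y2 = z" using less.hyps[OF _ y2(1,3) u(3)] by blast
    then show ?thesis unfolding uw(1) y2_def by (simp add: word_update_append)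
  qed
qed

text \<open>Sandwich an arbitrary configuration between the bottoms of the orders for \<open>\<sigma>\<close> and \<open>\<not> \<sigma>\<close>.\<close>
lemma balanced_synchronizes:
  assumes "finite V" "balanced f V b \<sigma>" "unique_fixed_point f V b z" "set w \<subseteq> V" "complete_for V w"
    "x \<in> cube V b"
  shows "word_update f w x = z"
proof -
  have from_bottom: "word_update f w (sw_bottom \<tau> V b) = z" if "balanced f V b \<tau>" for \<tau>
  proof -
    have "{i\<in>V. sw_bottom \<tau> V b i = \<tau> i} = V" unfolding sw_bottom_def by auto
    then show ?thesis
      using balanced_sync_from_below[OF assms(1) that assms(3) sw_bottom_in_cube sw_bottom_le
          assms(4)] assms(5) by simp
  qed
  have "sw_le \<sigma> V z (word_update f w x)"
    using balanced_monotone_word[OF assms(1,2) sw_bottom_in_cube assms(6) sw_bottom_le assms(4)]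
      from_bottom[OF assms(2)] by simp
  moreover have "sw_le \<sigma> V (word_update f w x) z"
    using balanced_monotone_word[OF assms(1) balanced_neg[OF assms(2)] sw_bottom_in_cube assms(6)
        sw_bottom_le assms(4)]
      from_bottom[OF balanced_neg[OF assms(2)]] sw_le_neg by metis
  ultimately show ?thesis
    using sw_le_antisym word_update_in_cube[OF assms(6,4)] assms(3)
    unfolding unique_fixed_point_def by blast
qed

lemma balanced_fixed_point_exists:
  assumes "finite V" "balanced f V b \<sigma>"
  shows "\<exists>z\<in>cube V b. fixed_on f V z"
proof -
  have "\<exists>z\<in>cube V b. fixed_on f V z" if "y \<in> cube V b" "sw_le \<sigma> V y (f y)" for y
    using that
  proof (induction "card {i\<in>V. y i = \<sigma> i}" arbitrary: y rule: less_induct)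
    case less
    show ?case
    proof (cases "fixed_on f V y")
      case False
      then obtain i where i: "i \<in> V" "y i = \<sigma> i" "f y i \<noteq> \<sigma> i"
        using unfixed_below_image[where f=f, OF less.prems(2)] unfolding fixed_on_def by blast
      let ?y = "async_update f i y"
      have "card ({k\<in>V. y k = \<sigma> k} - {i}) < card {k\<in>V. y k = \<sigma> k}"
        using assms(1) i by (intro card_Diff1_less) auto
      moreover have "{k\<in>V. y k = \<sigma> k} - {i} = {k\<in>V. ?y k = \<sigma> k}"
        using i unfolding async_update_def by auto
      ultimately have "card {k\<in>V. ?y k = \<sigma> k} < card {k\<in>V. y k = \<sigma> k}" by simp
      then show ?thesis
        using less.hyps cube_upd[OF less.prems(1) i(1)]
          balanced_update_increasing[OF assms less.prems i(1)] unfolding async_update_def by blast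
    qed (use less.prems in blast)
  qed
  then show ?thesis using sw_bottom_in_cube sw_bottom_le by blast
qed

section \<open>Cycles, strong connectivity and fixed points\<close>

lemma all_cycles_positive_closed_even:
  "all_cycles_positive f V b \<Longrightarrow> connects (local_arc f V b) v v ss \<Longrightarrow> even (neg_count ss)"
  unfolding all_cycles_positive_def positive_cycle_def using closed_connects_cycle by blast

lemma strongly_connected_connects:
  assumes "strongly_connected f V b" "u \<in> V" "v \<in> V"
  shows "\<exists>ss. connects (local_arc f V b) u v ss"
proof -
  let ?R = "{u\<in>V. \<exists>ss. connects (local_arc f V b) u v ss}"
  have "pred_closed f V b ?R"
    unfolding pred_closed_def
  proof (intro ballI allI impI)
    fix i j s assume "i \<in> ?R" and arc: "local_arc f V b j i s"
    then obtain ss where "connects (local_arc f V b) i v ss" by blast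
    then have "connects (local_arc f V b) j v (s # ss)"
      by (rule connects_Cons[where A="local_arc f V b", OF arc])
    then show "j \<in> ?R" using local_arc_in[OF arc] by blast
  qed
  moreover have "?R \<noteq> {}" using assms(3) connects_Nil[of "local_arc f V b" v] by blast
  moreover have "?R \<subseteq> V" by blast
  ultimately have "?R = V" using assms(1) unfolding strongly_connected_def by simp
  then show ?thesis using assms(2) by blast
qed

lemma not_strongly_connected_split:
  assumes "finite V" "\<not> strongly_connected f V b"
  obtains R where "R \<subseteq> V" "pred_closed f V b R" "card R < card V" "card (V - R) < card V"
proof -
  obtain R where R: "R \<subseteq> V" "R \<noteq> {}" "R \<noteq> V" "pred_closed f V b R"
    using assms(2) unfolding strongly_connected_def by blast
  then have "card R < card V" "card (V - R) < card V"
    using assms(1) by (auto intro: psubset_card_mono)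
  then show ?thesis using that R(1,4) by blast
qed

text \<open>Harary's balance theorem: label each vertex by the parity of negative arcs on walks from a
  root; positivity of all cycles makes this parity independent of the walk.\<close>
lemma strongly_connected_balanced:
  assumes "strongly_connected f V b" "all_cycles_positive f V b" "r \<in> V"
  shows "\<exists>\<sigma>. balanced f V b \<sigma>"
proof -
  let ?A = "local_arc f V b"
  have parity: "even (neg_count ss1) = even (neg_count ss2)"
    if "connects ?A r v ss1" "connects ?A r v ss2" for v ss1 ss2
  proof -
    have "v \<in> V" using connects_in[where A="?A", OF that(1) local_arc_in assms(3)] .
    then obtain ts where ts: "connects ?A v r ts"
      using strongly_connected_connects[OF assms(1) _ assms(3)] by blast
    have "even (neg_count (ss1 @ ts))" "even (neg_count (ss2 @ ts))"
      using all_cycles_positive_closed_even[OF assms(2) connects_append[where A="?A", OF _ ts]] that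
      by blast+
    then show ?thesis by simp
  qed
  define \<sigma> where "\<sigma> v = (\<exists>ss. connects ?A r v ss \<and> even (neg_count ss))" for v
  have \<sigma>: "\<sigma> v = even (neg_count ss)" if walk: "connects ?A r v ss" for v ss
  proof
    assume "\<sigma> v"
    then obtain ss' where "connects ?A r v ss'" "even (neg_count ss')" unfolding \<sigma>_def by blast
    then show "even (neg_count ss)" using parity[OF _ walk] by simp
  qed (use walk in \<open>auto simp: \<sigma>_def\<close>)
  have "s = (\<sigma> j = \<sigma> i)" if arc: "?A j i s" for j i s
  proof -
    obtain ss where ss: "connects ?A r j ss"
      using strongly_connected_connects[OF assms(1,3) conjunct1[OF local_arc_in[OF arc]]] by blast
    have "\<sigma> j = even (neg_count ss)" "\<sigma> i = even (neg_count (ss @ [s]))"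
      using \<sigma>[OF ss] \<sigma>[OF connects_snoc[where A="?A", OF ss arc]] by auto
    then show ?thesis by (cases s) auto
  qed
  then show ?thesis unfolding balanced_def by blast
qed

lemma local_arc_nonconstant:
  assumes "local_arc f V b j i s"
  obtains y where "y \<in> cube V b" "f y i \<noteq> c"
proof -
  obtain u where u: "u \<in> cube V b" "j \<in> V" "f u i \<noteq> f (u(j := True)) i"
    using assms unfolding local_arc_def by (auto split: if_splits)
  show ?thesis
  proof (cases "f u i = c")
    case True
    then show ?thesis using that[OF cube_upd[OF u(1,2)]] u(3) by simp
  qed (use that u(1) in blast)
qed

lemma local_arc_agreeing_with_fixed:
  assumes "finite V" "x \<in> cube V b" "y \<in> cube V b" "i \<in> V" "f x i = x i" "f y i \<noteq> x i"
  shows "\<exists>j\<in>V. x j \<noteq> y j \<and> local_arc f V b j i (x j = x i)"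
proof -
  have "f x i \<noteq> f y i" using assms(5,6) by simp
  then obtain j where "j \<in> V" "x j \<noteq> y j" "local_arc f V b j i (if x j then f x i else f y i)"
    using local_arc_if_differ[where f=f, OF assms(1-4)] by blast
  moreover have "(if x j then f x i else f y i) = (x j = x i)" using assms(5,6) by auto
  ultimately show ?thesis by auto
qed

lemma positive_cycle_if_agreeing_in_arcs:
  fixes x :: config
  assumes "finite D" "D \<noteq> {}" "\<And>i. i \<in> D \<Longrightarrow> \<exists>j\<in>D. local_arc f V b j i (x j = x i)"
  shows "\<not> all_cycles_negative f V b"
proof -
  let ?G = "\<lambda>j i s. local_arc f V b j i s \<and> s = (x j = x i)"
  obtain vs ss where "cycle ?G vs ss"
    using cycle_if_in_arcs[of D ?G] assms by blast
  then have "cycle (local_arc f V b) vs ss" "positive_cycle ss"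
    using cycle_mono cycle_positive_potential[of ?G vs ss x] by blast+
  then show ?thesis unfolding all_cycles_negative_def by blast
qed

text \<open>Coordinates where two fixed points differ each receive an arc from another such coordinate,
  agreeing with one of the fixed points; these arcs close up into a positive cycle.\<close>
lemma all_cycles_negative_fixed_point_unique:
  assumes "finite V" "all_cycles_negative f V b" "x \<in> cube V b" "y \<in> cube V b"
    "fixed_on f V x" "fixed_on f V y"
  shows "x = y"
proof (rule ccontr)
  assume "x \<noteq> y"
  let ?D = "{i\<in>V. x i \<noteq> y i}"
  have "?D \<noteq> {}" using cube_eqI[OF assms(3,4)] \<open>x \<noteq> y\<close> by blast
  moreover have "\<exists>j\<in>?D. local_arc f V b j i (x j = x i)" if i: "i \<in> ?D" for i
  proof -
    have "f x i = x i" "f y i \<noteq> x i" using i assms(5,6) unfolding fixed_on_def by auto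
    then show ?thesis
      using local_arc_agreeing_with_fixed[where f=f, OF assms(1,3,4)] i by blast
  qed
  ultimately show False
    using positive_cycle_if_agreeing_in_arcs[where D="?D" and x=x] assms(1,2) by simp
qed

lemma strongly_connected_negative_singleton:
  assumes "finite V" "V \<noteq> {}" "strongly_connected f V b" "all_cycles_negative f V b"
    "z \<in> cube V b" "fixed_on f V z"
  shows "\<exists>v. V = {v} \<and> (\<forall>s. \<not> local_arc f V b v v s)"
proof -
  have "\<exists>v\<in>V. \<forall>j s. \<not> local_arc f V b j v s"
  proof (rule ccontr)
    assume none: "\<not> (\<exists>v\<in>V. \<forall>j s. \<not> local_arc f V b j v s)"
    have "\<exists>j\<in>V. local_arc f V b j i (z j = z i)" if i: "i \<in> V" for i
    proof -
      obtain j s where "local_arc f V b j i s" using none i by blast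
      then obtain y where y: "y \<in> cube V b" "f y i \<noteq> z i" by (rule local_arc_nonconstant)
      have "f z i = z i" using assms(6) i unfolding fixed_on_def by blast
      then show ?thesis
        using local_arc_agreeing_with_fixed[where f=f, OF assms(1,5) y(1) i _ y(2)] by blast
    qed
    then show False
      using positive_cycle_if_agreeing_in_arcs[where D=V and x=z] assms(1,2,4) by blast
  qed
  then obtain v where v: "v \<in> V" "\<forall>j s. \<not> local_arc f V b j v s" by blast
  then have "pred_closed f V b {v}" unfolding pred_closed_def by auto
  then have "V = {v}" using assms(3) v(1) unfolding strongly_connected_def by blast
  then show ?thesis using v(2) by blast
qed

lemma singleton_synchronizes:
  assumes "V = {v}" "\<And>s. \<not> local_arc f V b v v s" "z \<in> cube V b" "fixed_on f V z"
    "set w \<subseteq> V" "complete_for V w" "x \<in> cube V b"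
  shows "word_update f w x = z"
proof -
  have "subseq [v] w" using assms(1,6) unfolding complete_for_def by auto
  then obtain u w' where w: "w = u @ v # w'" by (meson split_list subseq_singleton_left)
  define x1 where "x1 = word_update f u x"
  have x1: "x1 \<in> cube V b"
    unfolding x1_def using word_update_in_cube[OF assms(7)] assms(5) w by auto
  have "\<And>j s. local_arc f V b j v s \<Longrightarrow> j \<in> {}" using assms(1,2) local_arc_in by blast
  then have "f x1 v = f z v"
    using eq_if_agree_on_in_arcs[of V v f b "{}" x1 z] assms(1,3) x1 by blast
  then have "async_update f v x1 = z"
    unfolding async_update_def using assms(1,4) unfolding fixed_on_def
    by (intro cube_eqI[OF cube_upd[OF x1] assms(3)]) auto
  then show ?thesis
    using word_update_fixed[OF assms(4)] assms(5) w unfolding x1_def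
    by (simp add: word_update_append)
qed

lemma fixed_point_lift:
  assumes "finite V" "R \<subseteq> V" "pred_closed f V b R" "y \<in> cube V b" "fixed_on f R y"
    "u \<in> cube (V - R) y" "fixed_on f (V - R) u"
  shows "u \<in> cube V b \<and> fixed_on f V u"
proof
  show u: "u \<in> cube V b" using cube_subset[of "V - R" V y b] assms(4,6) by blast
  have agree: "u k = y k" if "k \<in> R" for k using assms(6) that unfolding cube_def by auto
  have "f u i = u i" if "i \<in> R" for i
    using pred_closed_agree[OF assms(1-3) that u assms(4) agree] assms(5) agree[OF that] that
    unfolding fixed_on_def by auto
  then show "fixed_on f V u" using assms(7) unfolding fixed_on_def by auto
qed

text \<open>Decompose along a proper predecessor-closed set, or balance a strongly connected network.\<close>
lemma all_cycles_positive_fixed_point_exists: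
  "finite V \<Longrightarrow> all_cycles_positive f V b \<Longrightarrow> \<exists>y\<in>cube V b. fixed_on f V y"
proof (induction "card V" arbitrary: V b rule: less_induct)
  case less
  show ?case
  proof (cases "strongly_connected f V b")
    case True
    show ?thesis
    proof (cases "V = {}")
      case True
      then show ?thesis using self_in_cube unfolding fixed_on_def by blast
    next
      case False
      then obtain \<sigma> where "balanced f V b \<sigma>"
        using strongly_connected_balanced[OF \<open>strongly_connected f V b\<close> less.prems(2)] by blast
      then show ?thesis using balanced_fixed_point_exists[OF less.prems(1)] by blast
    qed
  next
    case False
    with less.prems(1) obtain R where R: "R \<subseteq> V" "pred_closed f V b R"
      and card: "card R < card V" "card (V - R) < card V"
      by (rule not_strongly_connected_split)
    have fin: "finite R" "finite (V - R)" using less.prems(1) R(1) finite_subset by auto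
    obtain y where y: "y \<in> cube R b" "fixed_on f R y"
      using less.hyps[OF card(1) fin(1)
          all_cycles_positive_subset[OF R(1) self_in_cube less.prems(2)]] by blast
    have yV: "y \<in> cube V b" using cube_subset[OF R(1) self_in_cube] y(1) by blast
    obtain u where "u \<in> cube (V - R) y" "fixed_on f (V - R) u"
      using less.hyps[OF card(2) fin(2) all_cycles_positive_subset[OF _ yV less.prems(2)]] by blast
    then show ?thesis using fixed_point_lift[OF less.prems(1) R(1,2) yV y(2)] by blast
  qed
qed

section \<open>Synchronization by complete words\<close>

lemma word_update_pred_closed:
  assumes "finite V" "R \<subseteq> V" "pred_closed f V b R"
  shows "x \<in> cube V b \<Longrightarrow> x' \<in> cube V b \<Longrightarrow> (\<And>k. k \<in> R \<Longrightarrow> x k = x' k) \<Longrightarrow> set w \<subseteq> V \<Longrightarrow>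
    k \<in> R \<Longrightarrow> word_update f w x k = word_update f (filter (\<lambda>i. i \<in> R) w) x' k"
proof (induction w arbitrary: x x')
  case (Cons a w)
  have a: "a \<in> V" using Cons.prems(4) by simp
  have cube: "async_update f a x \<in> cube V b" "async_update f a x' \<in> cube V b"
    using cube_upd[OF Cons.prems(1) a] cube_upd[OF Cons.prems(2) a]
    unfolding async_update_def by auto
  show ?case
  proof (cases "a \<in> R")
    case True
    have "f x a = f x' a" using pred_closed_agree[OF assms True Cons.prems(1-3)] .
    then have "async_update f a x k = async_update f a x' k" if "k \<in> R" for k
      using Cons.prems(3) that unfolding async_update_def by auto
    then show ?thesis using Cons.IH[OF cube] Cons.prems(4,5) True by simp
  next
    case False
    then have "async_update f a x k = x' k" if "k \<in> R" for k
      using Cons.prems(3) that unfolding async_update_def by auto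
    then show ?thesis using Cons.IH[OF cube(1) Cons.prems(2)] Cons.prems(4,5) False by simp
  qed
qed simp

lemma word_update_skip_pred_closed:
  assumes "finite V" "R \<subseteq> V" "pred_closed f V b R" "z \<in> cube V b" "fixed_on f R z"
  shows "x \<in> cube V b \<Longrightarrow> (\<And>k. k \<in> R \<Longrightarrow> x k = z k) \<Longrightarrow> set w \<subseteq> V \<Longrightarrow>
    word_update f w x = word_update f (filter (\<lambda>i. i \<notin> R) w) x"
proof (induction w arbitrary: x)
  case (Cons a w)
  have a: "a \<in> V" using Cons.prems(3) by simp
  show ?case
  proof (cases "a \<in> R")
    case True
    have "f x a = f z a"
      using pred_closed_agree[OF assms(1-3) True Cons.prems(1) assms(4)] Cons.prems(2) .
    also have "\<dots> = x a" using assms(5) True Cons.prems(2) unfolding fixed_on_def by auto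
    finally have "async_update f a x = x" unfolding async_update_def by simp
    then show ?thesis using Cons.IH[of x] Cons.prems True by auto
  next
    case False
    have "async_update f a x \<in> cube V b"
      using cube_upd[OF Cons.prems(1) a] unfolding async_update_def .
    moreover have "async_update f a x k = z k" if "k \<in> R" for k
      using Cons.prems(2) False that unfolding async_update_def by auto
    ultimately show ?thesis using Cons.IH[of "async_update f a x"] False Cons.prems(3) by auto
  qed
qed simp

text \<open>The part of the word complete for \<open>R\<close> settles \<open>R\<close> to \<open>z\<close> regardless of the rest; the
  letters of \<open>R\<close> in the remaining part then act trivially.\<close>
lemma pred_closed_split_synchronizes:
  assumes "finite V" "R \<subseteq> V" "pred_closed f V b R" "z \<in> cube V b" "fixed_on f V z"
    and sync_R: "\<And>w x. set w \<subseteq> R \<Longrightarrow> complete_for R w \<Longrightarrow> x \<in> cube R z \<Longrightarrow> word_update f w x = z"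
    and sync_S: "\<And>w x. set w \<subseteq> V - R \<Longrightarrow> complete_for (V - R) w \<Longrightarrow> x \<in> cube (V - R) z \<Longrightarrow>
      word_update f w x = z"
    and "set w \<subseteq> V" "complete_for V w" "x \<in> cube V b"
  shows "word_update f w x = z"
proof -
  obtain w1 w2 where w: "w = w1 @ w2" "complete_for R w1" "complete_for (V - R) w2"
    using complete_for_split[OF assms(1,2,9)] .
  have sw: "set w1 \<subseteq> V" "set w2 \<subseteq> V" using assms(8) w(1) by auto
  define x' where "x' = (\<lambda>k. if k \<in> R then x k else z k)"
  have x'R: "x' \<in> cube R z" unfolding x'_def cube_def by auto
  have x'V: "x' \<in> cube V b" using cube_subset[OF assms(2,4)] x'R by blast
  define x1 where "x1 = word_update f w1 x"
  have x1V: "x1 \<in> cube V b" unfolding x1_def using word_update_in_cube[OF assms(10) sw(1)] .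
  have "complete_for R (filter (\<lambda>i. i \<in> R) w1)"
    using complete_for_filter[OF w(2), of "\<lambda>i. i \<in> R"] by simp
  then have "word_update f (filter (\<lambda>i. i \<in> R) w1) x' = z"
    by (intro sync_R[OF _ _ x'R]) auto
  then have x1R: "x1 k = z k" if "k \<in> R" for k
    using word_update_pred_closed[OF assms(1-3) assms(10) x'V _ sw(1) that] unfolding x1_def x'_def
    by auto
  have "x1 \<in> cube (V - R) z" using x1V x1R assms(4) unfolding cube_def by auto
  moreover have "complete_for (V - R) (filter (\<lambda>i. i \<notin> R) w2)"
    using complete_for_filter[OF w(3), of "\<lambda>i. i \<notin> R"] by simp
  ultimately have "word_update f (filter (\<lambda>i. i \<notin> R) w2) x1 = z"
    using sw(2) by (intro sync_S) auto
  moreover have "word_update f w2 x1 = word_update f (filter (\<lambda>i. i \<notin> R) w2) x1"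
    using word_update_skip_pred_closed[OF assms(1-4)] assms(5) assms(2) x1V x1R sw(2)
    unfolding fixed_on_def by blast
  ultimately show ?thesis unfolding w(1) word_update_append x1_def by simp
qed

lemma unique_fixed_point_complement:
  assumes "finite V" "R \<subseteq> V" "pred_closed f V b R" "unique_fixed_point f V b z"
  shows "unique_fixed_point f (V - R) z z"
proof -
  have z: "z \<in> cube V b" "fixed_on f V z" using assms(4) unfolding unique_fixed_point_def by auto
  then have zR: "fixed_on f R z" "fixed_on f (V - R) z"
    using assms(2) unfolding fixed_on_def by auto
  have "y = z" if "y \<in> cube (V - R) z" "fixed_on f (V - R) y" for y
    using fixed_point_lift[OF assms(1-3) z(1) zR(1) that] assms(4) unfolding unique_fixed_point_def
    by blast
  then show ?thesis using zR(2) unfolding unique_fixed_point_def by simp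
qed

text \<open>With only positive cycles a fixed point on \<open>R\<close> extends to one on \<open>V\<close>; with only negative
  cycles it is unique anyway.\<close>
lemma unique_fixed_point_pred_closed:
  assumes "finite V" "R \<subseteq> V" "pred_closed f V b R" "unique_fixed_point f V b z"
    "all_cycles_positive f V b \<or> all_cycles_negative f V b"
  shows "unique_fixed_point f R z z"
proof -
  have z: "z \<in> cube V b" "fixed_on f V z" using assms(4) unfolding unique_fixed_point_def by auto
  have "y = z" if y: "y \<in> cube R z" "fixed_on f R y" for y
  proof -
    have yV: "y \<in> cube V b" using cube_subset[OF assms(2) z(1)] y(1) by blast
    show ?thesis
    proof (cases "all_cycles_positive f V b")
      case True
      have "finite (V - R)" "all_cycles_positive f (V - R) y"
        using assms(1) all_cycles_positive_subset[OF _ yV True] by auto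
      then obtain u where u: "u \<in> cube (V - R) y" "fixed_on f (V - R) u"
        using all_cycles_positive_fixed_point_exists by blast
      have "u = z" using fixed_point_lift[OF assms(1-3) yV y(2) u] assms(4)
        unfolding unique_fixed_point_def by blast
      show ?thesis
      proof
        show "y k = z k" for k
          using u(1) y(1) \<open>u = z\<close> unfolding cube_def by (cases "k \<in> R") auto
      qed
    next
      case False
      then have "all_cycles_negative f R z"
        using assms(5) all_cycles_negative_subset[OF assms(2) z(1)] by blast
      moreover have "finite R" using assms(1,2) finite_subset by blast
      moreover have "fixed_on f R z" using z(2) assms(2) unfolding fixed_on_def by blast
      ultimately show ?thesis
        using all_cycles_negative_fixed_point_unique[OF _ _ y(1) self_in_cube y(2)] by blast
    qed
  qed
  then show ?thesis using z assms(2) unfolding unique_fixed_point_def fixed_on_def by auto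
qed

theorem complete_word_synchronizes:
  assumes "finite V" "unique_fixed_point f V b z"
    "all_cycles_positive f V b \<or> all_cycles_negative f V b"
    "set w \<subseteq> V" "complete_for V w" "x \<in> cube V b"
  shows "word_update f w x = z"
  using assms
proof (induction "card V" arbitrary: V b z w x rule: less_induct)
  case less
  have z: "z \<in> cube V b" "fixed_on f V z"
    using less.prems(2) unfolding unique_fixed_point_def by auto
  consider (empty) "V = {}" | (strong) "V \<noteq> {}" "strongly_connected f V b"
    | (split) "\<not> strongly_connected f V b" by blast
  then show ?case
  proof cases
    case empty
    then show ?thesis using less.prems(4,6) z(1) cube_empty by auto
  next
    case strong
    show ?thesis
    proof (cases "all_cycles_positive f V b")
      case True
      then obtain \<sigma> where "balanced f V b \<sigma>"
        using strongly_connected_balanced[OF strong(2) True] strong(1) by blast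
      then show ?thesis using balanced_synchronizes[OF less.prems(1) _ less.prems(2,4,5,6)] by blast
    next
      case False
      then obtain v where "V = {v}" "\<forall>s. \<not> local_arc f V b v v s"
        using strongly_connected_negative_singleton[OF less.prems(1) strong] less.prems(3) z
        by blast
      then show ?thesis using singleton_synchronizes z less.prems(4-6) by blast
    qed
  next
    case split
    with less.prems(1) obtain R where R: "R \<subseteq> V" "pred_closed f V b R"
      and card: "card R < card V" "card (V - R) < card V"
      by (rule not_strongly_connected_split)
    have fin: "finite R" "finite (V - R)" using less.prems(1) R(1) finite_subset by auto
    have signs: "all_cycles_positive f S z \<or> all_cycles_negative f S z" if "S \<subseteq> V" for S
      using less.prems(3) all_cycles_positive_subset[OF that z(1)]
        all_cycles_negative_subset[OF that z(1)] by blast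
    have unique: "unique_fixed_point f R z z" "unique_fixed_point f (V - R) z z"
      using unique_fixed_point_pred_closed[OF less.prems(1) R less.prems(2,3)]
        unique_fixed_point_complement[OF less.prems(1) R less.prems(2)] by auto
    show ?thesis
    proof (rule pred_closed_split_synchronizes[OF less.prems(1) R z _ _ less.prems(4-6)])
      show "word_update f w x = z" if "set w \<subseteq> R" "complete_for R w" "x \<in> cube R z" for w x
        using less.hyps[OF card(1) fin(1) unique(1) signs[OF R(1)] that] .
      show "word_update f w x = z"
        if "set w \<subseteq> V - R" "complete_for (V - R) w" "x \<in> cube (V - R) z" for w x
        using less.hyps[OF card(2) fin(2) unique(2) signs that] by blast
    qed
  qed
qed

section \<open>Boolean networks on \<open>[n]\<close>\<close>

lemma configs_eq_cube: "configs n = cube {0..<n} (\<lambda>_. False)"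
  unfolding configs_def cube_def by auto

lemma signed_arc_eq_local_arc: "signed_arc n f = local_arc f {0..<n} (\<lambda>_. False)"
  unfolding signed_arc_def local_arc_def configs_eq_cube by (intro ext) auto

lemma is_cycle_eq_cycle: "is_cycle n f = cycle (signed_arc n f)"
  unfolding is_cycle_def cycle_conv_nth by (intro ext) simp

lemma n_complete_eq_complete_for: "n_complete n = complete_for {0..<n}"
  unfolding n_complete_def complete_for_def by (intro ext) simp

lemma all_cycles_positive_iff:
  "all_cycles_positive f {0..<n} (\<lambda>_. False) \<longleftrightarrow> (\<forall>vs ss. is_cycle n f vs ss \<longrightarrow> positive_cycle ss)"
  unfolding all_cycles_positive_def is_cycle_eq_cycle signed_arc_eq_local_arc ..

lemma all_cycles_negative_iff:
  "all_cycles_negative f {0..<n} (\<lambda>_. False) \<longleftrightarrow> (\<forall>vs ss. is_cycle n f vs ss \<longrightarrow> \<not> positive_cycle ss)"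
  unfolding all_cycles_negative_def is_cycle_eq_cycle signed_arc_eq_local_arc ..

lemma fixed_on_iff:
  assumes "BN n f" "x \<in> configs n"
  shows "fixed_on f {0..<n} x \<longleftrightarrow> f x = x"
proof -
  have "f x \<in> configs n" using assms unfolding BN_def by blast
  then have "f x i = x i" if "\<not> i < n" for i using assms(2) that unfolding configs_def by auto
  then show ?thesis unfolding fixed_on_def fun_eq_iff by auto
qed

lemma synchronizes_if_unique_fixed_point:
  assumes "BN n f" "\<exists>!x. x \<in> configs n \<and> f x = x"
    "all_cycles_positive f {0..<n} (\<lambda>_. False) \<or> all_cycles_negative f {0..<n} (\<lambda>_. False)"
    "set w \<subseteq> {0..<n}" "n_complete n w"
  shows "synchronizes n w f"
proof -
  obtain z where "z \<in> configs n" "f z = z" "\<forall>y\<in>configs n. f y = y \<longrightarrow> y = z" using assms(2) by blast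
  then have "unique_fixed_point f {0..<n} (\<lambda>_. False) z"
    using fixed_on_iff[OF assms(1)] unfolding unique_fixed_point_def configs_eq_cube by blast
  then have "word_update f w x = z" if "x \<in> configs n" for x
    using complete_word_synchronizes[OF _ _ assms(3,4)] assms(5) that
    unfolding n_complete_eq_complete_for configs_eq_cube by blast
  then show ?thesis unfolding synchronizes_def by blast
qed

lemma synchronizing_fixed_point_unique:
  assumes "synchronizing n f" "x \<in> configs n" "y \<in> configs n"
    "fixed_on f {0..<n} x" "fixed_on f {0..<n} y"
  shows "x = y"
proof -
  obtain w c where "set w \<subseteq> {0..<n}" "\<forall>x\<in>configs n. word_update f w x = c"
    using assms(1) unfolding synchronizing_def synchronizes_def by blast
  then show ?thesis using word_update_fixed assms(2-5) by metis
qed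

lemma class_F_synchronizes:
  "f \<in> class_F n \<Longrightarrow> set w \<subseteq> {0..<n} \<Longrightarrow> n_complete n w \<Longrightarrow> synchronizes n w f"
  unfolding class_F_def all_cycles_positive_iff[symmetric] all_cycles_negative_iff[symmetric]
  using synchronizes_if_unique_fixed_point by blast

lemma class_F_plus_synchronizes:
  assumes "f \<in> class_F_plus n" "set w \<subseteq> {0..<n}" "n_complete n w"
  shows "synchronizes n w f"
proof -
  have f: "BN n f" "synchronizing n f" "all_cycles_positive f {0..<n} (\<lambda>_. False)"
    using assms(1) unfolding class_F_plus_def all_cycles_positive_iff by auto
  then obtain z where "z \<in> configs n" "fixed_on f {0..<n} z"
    using all_cycles_positive_fixed_point_exists configs_eq_cube by blast
  then have "\<exists>!x. x \<in> configs n \<and> f x = x"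
    using synchronizing_fixed_point_unique[OF f(2)] fixed_on_iff[OF f(1)] by metis
  then show ?thesis using synchronizes_if_unique_fixed_point f(1,3) assms(2,3) by blast
qed

lemma class_A_subset_class_F: "class_A n \<subseteq> class_F n"
proof
  fix f assume "f \<in> class_A n"
  then have f: "BN n f" "\<nexists>vs ss. is_cycle n f vs ss" unfolding class_A_def acyclic_BN_def by auto
  then have pos: "all_cycles_positive f {0..<n} (\<lambda>_. False)"
    and neg: "all_cycles_negative f {0..<n} (\<lambda>_. False)"
    unfolding all_cycles_positive_iff all_cycles_negative_iff by auto
  obtain z where "z \<in> configs n" "fixed_on f {0..<n} z"
    using all_cycles_positive_fixed_point_exists[OF _ pos] configs_eq_cube by auto
  then have "\<exists>!x. x \<in> configs n \<and> f x = x"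
    using all_cycles_negative_fixed_point_unique[OF _ neg] fixed_on_iff[OF f(1)]
    unfolding configs_eq_cube by (metis finite_atLeastLessThan)
  then show "f \<in> class_F n" unfolding class_F_def using f by blast
qed

lemma subseq_concat_replicate_upt:
  "set p \<subseteq> {0..<n} \<Longrightarrow> subseq p (concat (replicate (length p) [0..<n]))"
proof (induction p)
  case (Cons a p)
  then have "subseq ([a] @ p) ([0..<n] @ concat (replicate (length p) [0..<n]))"
    by (intro list_emb_append_mono) (auto simp: subseq_singleton_left)
  then show ?case by simp
qed simp

lemma n_complete_exists: "n_complete n (concat (replicate n [0..<n]))"
  unfolding n_complete_def
proof (intro allI impI)
  fix p :: "nat list" assume p: "distinct p \<and> set p = {0..<n}"
  have "subseq p (concat (replicate (length p) [0..<n]))"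
    using subseq_concat_replicate_upt p by simp
  moreover have "length p = n" using p distinct_card by fastforce
  ultimately show "subseq p (concat (replicate n [0..<n]))" by simp
qed

lemma class_A_subset_class_F_plus: "class_A n \<subseteq> class_F_plus n"
proof
  fix f assume f: "f \<in> class_A n"
  have "synchronizes n (concat (replicate n [0..<n])) f"
    using class_F_synchronizes class_A_subset_class_F f n_complete_exists by fastforce
  then have "synchronizing n f"
    unfolding synchronizing_def by (intro exI[of _ "concat (replicate n [0..<n])"]) auto
  then show "f \<in> class_F_plus n"
    using f unfolding class_A_def class_F_plus_def acyclic_BN_def by blast
qed

section \<open>The path network\<close>

text \<open>From the all-false configuration, \<open>p ! (n - 1)\<close> can only be
  switched on after the letters of \<open>p\<close> have occurred in order.\<close>
definition chain_network :: "nat \<Rightarrow> nat list \<Rightarrow> config \<Rightarrow> config" where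
  "chain_network n p x i \<longleftrightarrow> i < n \<and> (i = p ! 0 \<or> (\<exists>k. Suc k < n \<and> p ! Suc k = i \<and> x (p ! k)))"

context
  fixes n :: nat and p :: "nat list"
  assumes p: "distinct p" "set p = {0..<n}"
begin

lemma length_perm: "length p = n"
  using distinct_card[OF p(1)] p(2) by simp

lemma chain_network_BN: "BN n (chain_network n p)"
  unfolding BN_def configs_def chain_network_def by auto

lemma chain_network_arc:
  assumes "signed_arc n (chain_network n p) j i s"
  shows "\<exists>k. Suc k < n \<and> p ! k = j \<and> p ! Suc k = i"
proof -
  obtain x where "chain_network n p x i \<noteq> chain_network n p (x(j := True)) i"
    using assms unfolding signed_arc_def by (cases s) auto
  then obtain k where "Suc k < n" "p ! Suc k = i" "x (p ! k) \<noteq> (x(j := True)) (p ! k)"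
    unfolding chain_network_def by blast
  then show ?thesis by (cases "p ! k = j") auto
qed

lemma chain_network_acyclic: "acyclic_BN n (chain_network n p)"
proof -
  let ?r = "inv_into {..<n} (\<lambda>k. p ! k)"
  have r: "?r (p ! k) = k" if "k < n" for k
    using p(1) length_perm that by (simp add: inv_into_f_f inj_on_nth)
  have "?r j < ?r i" if "signed_arc n (chain_network n p) j i s" for j i s
    using chain_network_arc[OF that] r by force
  then show ?thesis
    unfolding acyclic_BN_def is_cycle_eq_cycle using no_cycle_if_rank by metis
qed

lemma chain_network_in_class_A: "chain_network n p \<in> class_A n"
  unfolding class_A_def using chain_network_BN chain_network_acyclic by blast

lemma chain_network_update_invariant:
  assumes "\<forall>m<n. x (p ! m) \<longrightarrow> subseq (take (Suc m) p) v"
  shows "\<forall>m<n. async_update (chain_network n p) a x (p ! m) \<longrightarrow> subseq (take (Suc m) p) (v @ [a])"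
proof (intro allI impI)
  fix m assume m: "m < n" "async_update (chain_network n p) a x (p ! m)"
  show "subseq (take (Suc m) p) (v @ [a])"
  proof (cases "p ! m = a")
    case False
    then show ?thesis using assms m unfolding async_update_def by (simp add: subseq_rev_drop_many)
  next
    case True
    have ml: "m < length p" using m(1) length_perm by simp
    show ?thesis
    proof (cases m)
      case 0
      then show ?thesis using True ml by (cases p) (auto simp: subseq_singleton_left)
    next
      case (Suc m')
      have "chain_network n p x a" using m(2) True unfolding async_update_def by simp
      moreover have "a \<noteq> p ! 0"
        using nth_eq_iff_index_eq[OF p(1), of m 0] ml Suc True by (cases p) auto
      ultimately obtain k where k: "Suc k < n" "p ! Suc k = a" "x (p ! k)"
        unfolding chain_network_def by blast
      then have "k = m'" using nth_eq_iff_index_eq[OF p(1), of "Suc k" m] ml Suc True length_perm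
        by simp
      then have "subseq (take (Suc m') p @ [a]) (v @ [a])"
        using assms k Suc by (intro list_emb_append_mono) auto
      then show ?thesis using Suc True ml by (simp add: take_Suc_conv_app_nth)
    qed
  qed
qed

lemma chain_network_run:
  "\<forall>m<n. x (p ! m) \<longrightarrow> subseq (take (Suc m) p) v \<Longrightarrow>
   \<forall>m<n. word_update (chain_network n p) w x (p ! m) \<longrightarrow> subseq (take (Suc m) p) (v @ w)"
proof (induction w arbitrary: x v)
  case (Cons a w)
  then show ?case using Cons.IH[OF chain_network_update_invariant[OF Cons.prems]] by simp
qed simp

lemma chain_network_fixes_ones: "chain_network n p (\<lambda>i. i < n) = (\<lambda>i. i < n)"
proof
  fix i
  show "chain_network n p (\<lambda>i. i < n) i = (i < n)"
  proof (cases "i < n")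
    case True
    then have "i \<in> set p" using p(2) by simp
    then obtain m where m: "m < n" "p ! m = i" using length_perm by (auto simp: in_set_conv_nth)
    show ?thesis
    proof (cases m)
      case (Suc k)
      have "p ! k \<in> set p" using m(1) Suc length_perm by simp
      then show ?thesis using p(2) m Suc True unfolding chain_network_def by auto
    qed (use m True in \<open>auto simp: chain_network_def\<close>)
  qed (simp add: chain_network_def)
qed

lemma chain_network_not_synchronizes:
  assumes "\<not> subseq p w"
  shows "\<not> synchronizes n w (chain_network n p)"
proof
  assume sync: "synchronizes n w (chain_network n p)"
  have n: "0 < n" using assms length_perm by (cases p) auto
  define ones :: config where "ones = (\<lambda>i. i < n)"
  have "chain_network n p ones = ones" unfolding ones_def by (rule chain_network_fixes_ones)
  then have "word_update (chain_network n p) w ones = ones"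
    by (induction w) (auto simp: async_update_def)
  moreover have "ones (p ! (n - 1))" using p(2) length_perm n unfolding ones_def by auto
  moreover have "\<not> word_update (chain_network n p) w (\<lambda>_. False) (p ! (n - 1))"
    using chain_network_run[of "\<lambda>_. False" "[]" w, rule_format, of "n - 1"] assms n length_perm
    by auto
  moreover have "ones \<in> configs n" "(\<lambda>_. False) \<in> configs n" unfolding ones_def configs_def by auto
  ultimately show False using sync unfolding synchronizes_def by metis
qed

end

lemma not_n_complete_witness:
  assumes "\<not> n_complete n w"
  shows "\<exists>f\<in>class_A n. \<not> synchronizes n w f"
proof -
  obtain p where "distinct p" "set p = {0..<n}" "\<not> subseq p w"
    using assms unfolding n_complete_def by blast
  then show ?thesis using chain_network_in_class_A chain_network_not_synchronizes by blast
qed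

theorem proposition10:
  fixes n :: nat and w :: "nat list"
  assumes "set w \<subseteq> {0..<n}"
  shows "(n_complete n w \<longleftrightarrow> (\<forall>f\<in>class_F n. synchronizes n w f))
       \<and> (n_complete n w \<longleftrightarrow> (\<forall>f\<in>class_F_plus n. synchronizes n w f))
       \<and> (n_complete n w \<longleftrightarrow> (\<forall>f\<in>class_A n. synchronizes n w f))"
proof -
  have F: "n_complete n w \<Longrightarrow> \<forall>f\<in>class_F n. synchronizes n w f"
    using class_F_synchronizes assms by blast
  have F_plus: "n_complete n w \<Longrightarrow> \<forall>f\<in>class_F_plus n. synchronizes n w f"
    using class_F_plus_synchronizes assms by blast
  have A: "\<forall>f\<in>class_A n. synchronizes n w f \<Longrightarrow> n_complete n w"
    using not_n_complete_witness by blast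
  show ?thesis using F F_plus A class_A_subset_class_F class_A_subset_class_F_plus by blast
qed

end
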